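(* Let $(\Omega,\mathscr{A},\mu)$ be a finite measure space, let $P$ be a finite set, and let $\{A_p\}_{p\in P}\subseteq\mathscr{A}$ be a family of measurable sets. Let $\{B_1,B^*_1\},\{B_2,B^*_2\},\dots,\{B_k,B^*_k\}$ be pairs of subsets of $P$ such that for every $i\in\{1,\dots,k\}$ we have $B_i\cap B^*_i=\emptyset$ and $$\bigcap_{p\in B_i}A_p\subseteq\bigcup_{p\in B^*_i}A_p .$$ For $i\in\{1,\dots,k\}$ put $$\mathscr{B}_i=\{I\subseteq P:\ I\supseteq B_i,\ \text{and } I\not\supseteq B_j\setminus B^*_i \text{ for every } j<i\},$$ and $\mathscr{B}=\mathscr{B}_1\cup\mathscr{B}_2\cup\cdots\cup\mathscr{B}_k$. Then $$\mu\Big(\bigcap_{p\in P}\overline{A}_p\Big)=\sum_{I\in 2^P\setminus\mathscr{B}}(-1)^{|I|}\,\mu\Big(\bigcap_{i\in I}A_i\Big).$$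
   Context: $\overline{A}_p=\Omega\setminus A_p$ denotes the complement of $A_p$; $2^P$ denotes the power set of $P$; the intersection over the empty index set is $\Omega$. No ordering on $P$ is assumed; the pairs are indexed $1,\dots,k$ and the condition "$j<i$" refers to these indices. *)

theory Defs
  imports "HOL-Analysis.Analysis"
begin

text \<open>Intersection of the sets A p over p in I, taken inside the space Omega;
  the intersection over the empty index set is Omega.\<close>
definition inter_in :: "'a set \<Rightarrow> ('p \<Rightarrow> 'a set) \<Rightarrow> 'p set \<Rightarrow> 'a set" where
  "inter_in \<Omega> A I = \<Omega> \<inter> (\<Inter>p\<in>I. A p)"

definition Bfam :: "'p set \<Rightarrow> (nat \<Rightarrow> 'p set) \<Rightarrow> (nat \<Rightarrow> 'p set) \<Rightarrow> nat \<Rightarrow> 'p set set" where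
  "Bfam P B Bs i = {I. I \<subseteq> P \<and> B i \<subseteq> I \<and> (\<forall>j\<in>{1..<i}. \<not> (B j - Bs i \<subseteq> I))}"

end

theory Submission
  imports Defs
begin

text \<open>Evaluate both sides pointwise: for a point x with S = {p \<in> P. x \<in> A p}, the indicator
  of each intersection over I is 1 exactly when I \<subseteq> S, so the right-hand side becomes the
  alternating sum over the subsets of S outside the families \<B>_i. These families are pairwise
  disjoint, and the hypothesis on the pair i provides an element q \<in> S \<inter> B*_i whenever
  B_i \<subseteq> S; toggling q is an involution of the subsets of S in \<B>_i that changes the parity of
  the cardinality, so each \<B>_i contributes 0. What is left is the alternating sum over all subsets
  of S, which is the indicator of S = {}, i.e. of the intersection of the complements.
  Integrating this identity gives the theorem.\<close>

lemma sum_minus_one_power_card_toggle_closed: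
  fixes F :: "'p set set"
  assumes "finite F" and "\<And>I. I \<in> F \<Longrightarrow> finite I"
    and "\<And>I. I \<in> F \<Longrightarrow> insert q I \<in> F \<and> I - {q} \<in> F"
  shows "(\<Sum>I\<in>F. (-1) ^ card I) = (0::'b::ring_1)"
proof -
  define F0 where "F0 = {I\<in>F. q \<notin> I}"
  have F_split: "F = F0 \<union> insert q ` F0"
  proof (intro equalityI subsetI)
    fix I assume I: "I \<in> F"
    show "I \<in> F0 \<union> insert q ` F0"
    proof (cases "q \<in> I")
      case True
      then have "I = insert q (I - {q})" "I - {q} \<in> F0" using I assms(3) by (auto simp: F0_def)
      then show ?thesis by blast
    qed (use I in \<open>auto simp: F0_def\<close>)
  qed (use assms(3) in \<open>auto simp: F0_def\<close>)
  have "inj_on (insert q) F0"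
    by (auto simp: F0_def inj_on_def insert_ident)
  then have "(\<Sum>I\<in>insert q ` F0. (-1) ^ card I) = (\<Sum>I\<in>F0. (-1) ^ card (insert q I) :: 'b)"
    by (rule sum.reindex[unfolded comp_def])
  also have "\<dots> = - (\<Sum>I\<in>F0. (-1) ^ card I)"
    using assms(2) by (simp add: F0_def sum_negf)
  finally have "(\<Sum>I\<in>insert q ` F0. (-1) ^ card I) = - (\<Sum>I\<in>F0. (-1) ^ card I :: 'b)" .
  moreover have "F0 \<inter> insert q ` F0 = {}" and "finite F0"
    using \<open>finite F\<close> by (auto simp: F0_def)
  ultimately show ?thesis
    by (subst F_split) (simp add: sum.union_disjoint)
qed

lemma sum_minus_one_power_card_Pow:
  assumes "finite S"
  shows "(\<Sum>I\<in>Pow S. (-1) ^ card I) = (if S = {} then 1 else 0 :: 'b::ring_1)"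
proof (cases "S = {}")
  case False
  then obtain q where "q \<in> S" by blast
  with assms show ?thesis
    by (auto intro!: sum_minus_one_power_card_toggle_closed intro: finite_subset)
qed simp

lemma Bfam_disjoint:
  assumes "1 \<le> i" and "i < j"
  shows "Bfam P B Bs i \<inter> Bfam P B Bs j = {}"
  using assms by (auto simp: Bfam_def)

lemma disjoint_family_on_Bfam: "disjoint_family_on (Bfam P B Bs) {1..k}"
  unfolding disjoint_family_on_def
  by (metis Bfam_disjoint Int_commute atLeastAtMost_iff linorder_neqE_nat)

lemma sum_minus_one_power_card_Pow_inter_Bfam:
  assumes "finite S" and "S \<subseteq> P" and "B i \<inter> Bs i = {}"
    and "B i \<subseteq> S \<Longrightarrow> S \<inter> Bs i \<noteq> {}"
  shows "(\<Sum>I\<in>Pow S \<inter> Bfam P B Bs i. (-1) ^ card I) = (0::'b::ring_1)"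
proof (cases "B i \<subseteq> S")
  case False
  then have "Pow S \<inter> Bfam P B Bs i = {}" by (auto simp: Bfam_def)
  then show ?thesis by simp
next
  case True
  then obtain q where q: "q \<in> S" "q \<in> Bs i" using assms(4) by blast
  then have "q \<notin> B i" using assms(3) by blast
  show ?thesis
  proof (rule sum_minus_one_power_card_toggle_closed)
    show "finite (Pow S \<inter> Bfam P B Bs i)" using assms(1) by simp
    show "finite I" if "I \<in> Pow S \<inter> Bfam P B Bs i" for I
      using that assms(1) by (blast intro: finite_subset)
    fix I assume I: "I \<in> Pow S \<inter> Bfam P B Bs i"
    \<comment> \<open>as q \<in> B*_i, toggling q does not affect the conditions B_j - B*_i \<nsubseteq> I\<close>
    have "\<not> B j - Bs i \<subseteq> insert q I" "\<not> B j - Bs i \<subseteq> I - {q}" if "j \<in> {1..<i}" for j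
      using I that q(2) by (auto simp: Bfam_def)
    with I q \<open>q \<notin> B i\<close> assms(2)
    show "insert q I \<in> Pow S \<inter> Bfam P B Bs i \<and> I - {q} \<in> Pow S \<inter> Bfam P B Bs i"
      by (auto simp: Bfam_def)
  qed
qed

lemma sum_minus_one_power_card_Pow_diff_Bfam:
  assumes "finite S" and "S \<subseteq> P"
    and "\<And>i. i \<in> {1..k} \<Longrightarrow> B i \<inter> Bs i = {}"
    and "\<And>i. i \<in> {1..k} \<Longrightarrow> B i \<subseteq> S \<Longrightarrow> S \<inter> Bs i \<noteq> {}"
  shows "(\<Sum>I\<in>Pow S - (\<Union>i\<in>{1..k}. Bfam P B Bs i). (-1) ^ card I)
    = (if S = {} then 1 else 0 :: 'b::ring_1)"
proof -
  let ?D = "Pow S - (\<Union>i\<in>{1..k}. Bfam P B Bs i)"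
  let ?U = "\<Union>i\<in>{1..k}. Pow S \<inter> Bfam P B Bs i"
  have "(\<Sum>I\<in>?U. (-1) ^ card I :: 'b)
      = (\<Sum>i\<in>{1..k}. \<Sum>I\<in>Pow S \<inter> Bfam P B Bs i. (-1) ^ card I)"
    using disjoint_family_on_Bfam[of P B Bs k] assms(1)
    by (intro sum.UNION_disjoint_family) (auto simp: disjoint_family_on_def)
  also have "\<dots> = 0"
    using assms by (simp add: sum_minus_one_power_card_Pow_inter_Bfam)
  finally have "(\<Sum>I\<in>?U. (-1) ^ card I :: 'b) = 0" .
  moreover have "(\<Sum>I\<in>?D \<union> ?U. (-1) ^ card I :: 'b)
      = (\<Sum>I\<in>?D. (-1) ^ card I) + (\<Sum>I\<in>?U. (-1) ^ card I)"
    using assms(1) by (intro sum.union_disjoint) auto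
  moreover have "?D \<union> ?U = Pow S" by blast
  ultimately have "(\<Sum>I\<in>?D. (-1) ^ card I :: 'b) = (\<Sum>I\<in>Pow S. (-1) ^ card I)"
    by simp
  also have "\<dots> = (if S = {} then 1 else 0)"
    by (rule sum_minus_one_power_card_Pow[OF assms(1)])
  finally show ?thesis .
qed

lemma inter_in_in_sets:
  assumes "finite I" and "\<And>p. p \<in> I \<Longrightarrow> A p \<in> sets M"
  shows "inter_in (space M) A I \<in> sets M"
proof (cases "I = {}")
  case False
  with assms have "(\<Inter>p\<in>I. A p) \<in> sets M" by (intro sets.finite_INT) auto
  then show ?thesis by (auto simp: inter_in_def)
qed (simp add: inter_in_def)

lemma sum_indicator_inter_in:
  fixes c :: "'p set \<Rightarrow> real"
  assumes "finite P" and "x \<in> \<Omega>"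
  shows "(\<Sum>I\<in>Pow P - F. c I * indicator (inter_in \<Omega> A I) x)
    = (\<Sum>I\<in>Pow {p\<in>P. x \<in> A p} - F. c I)"
proof -
  have "(\<Sum>I\<in>Pow P - F. c I * indicator (inter_in \<Omega> A I) x)
      = (\<Sum>I\<in>Pow P - F. if I \<in> Pow {p\<in>P. x \<in> A p} - F then c I else 0)"
    using assms(2) by (intro sum.cong) (auto simp: inter_in_def indicator_def)
  also have "\<dots> = (\<Sum>I\<in>Pow {p\<in>P. x \<in> A p} - F. c I)"
    using assms(1) by (subst sum.If_cases) (auto intro!: sum.cong)
  finally show ?thesis .
qed

lemma measure_eq_sum_if_indicator_eq:
  fixes c :: "'i \<Rightarrow> real"
  assumes "finite_measure M" and "finite N"
    and "X \<in> sets M" and "\<And>I. I \<in> N \<Longrightarrow> E I \<in> sets M"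
    and "\<And>x. x \<in> space M \<Longrightarrow> indicator X x = (\<Sum>I\<in>N. c I * indicator (E I) x)"
  shows "measure M X = (\<Sum>I\<in>N. c I * measure M (E I))"
proof -
  have integrable: "integrable M (indicator Y :: 'a \<Rightarrow> real)" if "Y \<in> sets M" for Y
    using that finite_measure.emeasure_finite[OF assms(1)] by (simp add: less_top)
  have "measure M X = (\<integral>x. indicator X x \<partial>M)"
    using sets.Int_space_eq2[OF assms(3)] by simp
  also have "\<dots> = (\<integral>x. (\<Sum>I\<in>N. c I * indicator (E I) x) \<partial>M)"
    using assms(5) by (rule Bochner_Integration.integral_cong[OF refl])
  also have "\<dots> = (\<Sum>I\<in>N. c I * (\<integral>x. indicator (E I) x \<partial>M))"
    using assms(4) by (simp add: Bochner_Integration.integral_sum integrable)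
  also have "\<dots> = (\<Sum>I\<in>N. c I * measure M (E I))"
    using assms(4) by (simp add: sets.Int_space_eq2)
  finally show ?thesis .
qed

theorem theorem2:
  fixes M :: "'a measure" and P :: "'p set" and A :: "'p \<Rightarrow> 'a set"
    and k :: nat and B Bs :: "nat \<Rightarrow> 'p set"
  assumes "finite_measure M"
    and "finite P"
    and "\<And>p. p \<in> P \<Longrightarrow> A p \<in> sets M"
    and "\<And>i. i \<in> {1..k} \<Longrightarrow> B i \<subseteq> P \<and> Bs i \<subseteq> P"
    and "\<And>i. i \<in> {1..k} \<Longrightarrow> B i \<inter> Bs i = {}"
    and "\<And>i. i \<in> {1..k} \<Longrightarrow> inter_in (space M) A (B i) \<subseteq> (\<Union>p\<in>Bs i. A p)"
  shows "measure M (inter_in (space M) (\<lambda>p. space M - A p) P)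
    = (\<Sum>I\<in>Pow P - (\<Union>i\<in>{1..k}. Bfam P B Bs i).
         (-1) ^ card I * measure M (inter_in (space M) A I))"
proof (rule measure_eq_sum_if_indicator_eq[OF assms(1)])
  show "finite (Pow P - (\<Union>i\<in>{1..k}. Bfam P B Bs i))"
    using assms(2) by simp
  show "inter_in (space M) (\<lambda>p. space M - A p) P \<in> sets M"
    using assms(2,3) by (intro inter_in_in_sets) auto
  show "inter_in (space M) A I \<in> sets M" if "I \<in> Pow P - (\<Union>i\<in>{1..k}. Bfam P B Bs i)" for I
    using that assms(2,3) by (intro inter_in_in_sets) (auto intro: finite_subset)
  fix x assume x: "x \<in> space M"
  let ?S = "{p\<in>P. x \<in> A p}"
  have cover: "?S \<inter> Bs i \<noteq> {}" if i: "i \<in> {1..k}" and BS: "B i \<subseteq> ?S" for i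
  proof -
    have "x \<in> inter_in (space M) A (B i)"
      using x BS by (auto simp: inter_in_def)
    then obtain p where "p \<in> Bs i" and "x \<in> A p"
      using assms(6)[OF i] by blast
    then show ?thesis
      using assms(4)[OF i] by blast
  qed
  have "indicator (inter_in (space M) (\<lambda>p. space M - A p) P) x
      = (if ?S = {} then 1 else 0 :: real)"
    using x by (auto simp: inter_in_def indicator_def)
  also have "\<dots> = (\<Sum>I\<in>Pow ?S - (\<Union>i\<in>{1..k}. Bfam P B Bs i). (-1) ^ card I)"
    using assms(2,5) cover by (intro sum_minus_one_power_card_Pow_diff_Bfam[symmetric]) auto
  also have "\<dots> = (\<Sum>I\<in>Pow P - (\<Union>i\<in>{1..k}. Bfam P B Bs i).
      (-1) ^ card I * indicator (inter_in (space M) A I) x)"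
    by (rule sum_indicator_inter_in[OF assms(2) x, symmetric])
  finally show "indicator (inter_in (space M) (\<lambda>p. space M - A p) P) x = \<dots>" .
qed

end
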